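(* Let $p>3$ be a prime. Then $$\left(\tfrac{p-1}{2}\right)!!\prod_{\substack{i,j=1\\ p\nmid 2i+j}}^{(p-1)/2}(2i+j)\ \equiv\ \left(\frac{-2}{p}\right)\left(\tfrac{p-3}{2}\right)!!\prod_{\substack{i,j=1\\ p\nmid 2i-j}}^{(p-1)/2}(2i-j)\ \equiv\ \pm1\pmod p.$$
   Context: For a positive integer $n$, $n!!=\prod_{k=0}^{\lfloor(n-1)/2\rfloor}(n-2k)$, and $0!!=1$. $\left(\frac{\cdot}{p}\right)$ denotes the Legendre symbol. *)

theory Defs
  imports "HOL-Number_Theory.Number_Theory"
begin

definition dfact :: "nat \<Rightarrow> nat" where
  "dfact n = (if n = 0 then 1 else (\<Prod>k\<in>{0..(n - 1) div 2}. n - 2 * k))"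

end

theory Submission
  imports Defs
begin

text \<open>
  Put \<open>n = (p - 1)/2\<close>. Grouping the double products by \<open>i\<close>, the \<open>i\<close>-th factor of the left
  product is the product of the non-multiples of \<open>p\<close> in \<open>[2i+1, 2i+n]\<close>, that of the right
  product the one over \<open>[2i-n, 2i-1]\<close>. Together with \<open>2i\<close> they fill a window of \<open>p\<close> consecutive
  integers, whose non-multiples of \<open>p\<close> multiply to \<open>(p-1)! \<equiv> -1\<close> by Wilson's theorem; with
  \<open>n!! (n-1)!! = n!\<close> and Euler's criterion \<open>(-2/p) \<equiv> (-2)^n\<close> this gives \<open>A B \<equiv> 1\<close>.
  Pairing the left factors \<open>i\<close> and \<open>i + \<lceil>n/2\<rceil>\<close> into further windows shows \<open>A \<equiv> \<plusminus>1\<close>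
  for even \<open>n\<close> and \<open>A \<equiv> \<plusminus>(p-2)!!\<close> for odd \<open>n\<close>, where \<open>((p-2)!!)\<^sup>2 \<equiv> (-1)^(n+1)\<close>; so
  \<open>A\<^sup>2 \<equiv> 1\<close>, whence \<open>A \<equiv> B\<close> and \<open>B\<^sup>2 \<equiv> 1\<close>.
\<close>

lemma cong_eq_if_mult_eq_one:
  fixes a b m :: int
  assumes "[a * b = 1] (mod m)" and "[a^2 = 1] (mod m)"
  shows "[a = b] (mod m)"
proof -
  have "[a * (a * b) = a] (mod m)" using cong_scalar_left[OF assms(1), of a] by simp
  moreover have "[a * (a * b) = b] (mod m)"
    using cong_scalar_right[OF assms(2), of b] by (simp add: power2_eq_square mult.assoc)
  ultimately show ?thesis by (metis cong_sym cong_trans)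
qed

lemma cong_square_eq_one_prime:
  fixes b q :: int
  assumes "prime q" and "[b^2 = 1] (mod q)"
  shows "[b = 1] (mod q) \<or> [b = -1] (mod q)"
  using assms by (auto simp: power2_eq_square cong_iff_dvd_diff square_diff_one_factored
                       dest: prime_dvd_multD)

subsection \<open>Double factorials\<close>

lemma dfact_Suc_Suc: "dfact (Suc (Suc n)) = (n + 2) * dfact n"
proof (cases n)
  case 0 then show ?thesis by (simp add: dfact_def)
next
  case (Suc k)
  have "dfact (Suc (Suc n)) = (\<Prod>k=0..Suc ((n - 1) div 2). Suc (Suc n) - 2 * k)"
    unfolding dfact_def using Suc by simp
  also have "\<dots> = (n + 2) * (\<Prod>k=0..(n - 1) div 2. Suc (Suc n) - 2 * Suc k)"
    by (subst prod.atLeast0_atMost_Suc_shift) simp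
  also have "(\<Prod>k=0..(n - 1) div 2. Suc (Suc n) - 2 * Suc k) = dfact n"
    unfolding dfact_def using Suc by simp
  finally show ?thesis .
qed

lemma dfact_Suc_mult_dfact: "dfact (Suc n) * dfact n = fact (Suc n)"
proof (induction n)
  case 0 then show ?case by (simp add: dfact_def)
next
  case (Suc n) then show ?case by (simp add: dfact_Suc_Suc algebra_simps)
qed

lemma dfact_add_double:
  "int (dfact (a + 2 * k)) = int (dfact a) * (\<Prod>i\<in>{1..int k}. int a + 2 * i)"
proof (induction k)
  case 0 then show ?case by simp
next
  case (Suc k)
  have "a + 2 * Suc k = Suc (Suc (a + 2 * k))" by simp
  moreover have "{1..int (Suc k)} = insert (int k + 1) {1..int k}" by auto
  ultimately show ?case using Suc by (simp add: dfact_Suc_Suc algebra_simps)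
qed

lemma prod_evens: "(\<Prod>i\<in>{1..int k}. 2 * i) = 2 ^ k * fact k"
proof (induction k)
  case 0 then show ?case by simp
next
  case (Suc k)
  have "{1..int (Suc k)} = insert (int k + 1) {1..int k}" by auto
  then show ?case using Suc by (simp add: algebra_simps)
qed

lemma dfact_even: "int (dfact (2 * k)) = (\<Prod>i\<in>{1..int k}. 2 * i)"
  using dfact_add_double[of 0 k] by (simp add: dfact_def)

lemma dfact_odd: "int (dfact (2 * k + 1)) = (\<Prod>i\<in>{0..int k}. 2 * i + 1)"
proof (induction k)
  case 0 then show ?case by (simp add: dfact_def)
next
  case (Suc k)
  have "2 * Suc k + 1 = Suc (Suc (2 * k + 1))" by simp
  moreover have "{0..int (Suc k)} = insert (int k + 1) {0..int k}" by auto
  ultimately show ?case using Suc by (simp add: dfact_Suc_Suc algebra_simps)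
qed

text \<open>\<open>((p-2)!!)\<^sup>2 \<equiv> (-1)^((p+1)/2) (mod p)\<close>: reflecting \<open>2k+1 \<equiv> -(p-1-2k)\<close> turns \<open>(p-2)!!\<close>
  into \<open>\<plusminus>(p-1)!!\<close>, and \<open>(p-2)!! (p-1)!! = (p-1)! \<equiv> -1\<close>.\<close>
lemma dfact_square_cong:
  assumes "prime p" and "p = 2 * n + 1"
  shows "[int (dfact (2 * n - 1))^2 = (-1)^(n+1)] (mod int p)"
proof -
  define D where "D = int (dfact (2 * n - 1))"
  have n1: "n \<ge> 1" using prime_gt_1_nat[OF assms(1)] assms(2) by simp
  have "2 * n - 1 = 2 * (n - 1) + 1" "int (n - 1) = int n - 1" using n1 by auto
  then have "D = (\<Prod>k\<in>{0..int n - 1}. 2 * k + 1)"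
    unfolding D_def by (metis dfact_odd)
  also have "[\<dots> = (\<Prod>k\<in>{0..int n - 1}. -1 * (2 * (int n - k)))] (mod int p)"
  proof (rule cong_prod)
    fix k :: int
    have "2 * k + 1 - -1 * (2 * (int n - k)) = int p" using assms(2) by simp
    then show "[2 * k + 1 = -1 * (2 * (int n - k))] (mod int p)"
      unfolding cong_iff_dvd_diff by simp
  qed
  also have "(\<Prod>k\<in>{0..int n - 1}. -1 * (2 * (int n - k))) = (-1)^n * (\<Prod>k\<in>{0..int n - 1}. 2 * (int n - k))"
    by (simp only: prod.distrib prod_constant) simp
  also have "(\<Prod>k\<in>{0..int n - 1}. 2 * (int n - k)) = (\<Prod>j\<in>{1..int n}. 2 * j)"
    by (rule prod.reindex_bij_witness[where i = "\<lambda>j. int n - j" and j = "\<lambda>k. int n - k"]) auto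
  finally have reflect: "[D = (-1)^n * int (dfact (2 * n))] (mod int p)"
    by (simp add: dfact_even)
  have "int (dfact (2 * n)) * D = fact (p - 1)"
  proof -
    have "dfact (2 * n) * dfact (2 * n - 1) = fact (p - 1)"
      using dfact_Suc_mult_dfact[of "2 * n - 1"] n1 assms(2) by simp
    then show ?thesis unfolding D_def by (metis of_nat_fact of_nat_mult)
  qed
  then have "[D^2 = (-1)^n * fact (p - 1)] (mod int p)"
    using cong_scalar_right[OF reflect, of D] by (simp add: power2_eq_square mult.assoc)
  also have "[(-1)^n * fact (p - 1) = (-1)^n * (-1 :: int)] (mod int p)"
    by (rule cong_scalar_left) (rule wilson_theorem[OF assms(1)])
  finally show ?thesis unfolding D_def by simp
qed

subsection \<open>Products of the non-multiples of a modulus\<close>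

definition prod_nonmultiples :: "int \<Rightarrow> int set \<Rightarrow> int" where
  "prod_nonmultiples m S = (\<Prod>t\<in>{t\<in>S. \<not> m dvd t}. t)"

lemma prod_nonmultiples_split:
  assumes "a \<le> b + 1" and "b \<le> c"
  shows "prod_nonmultiples m {a..c} = prod_nonmultiples m {a..b} * prod_nonmultiples m {b+1..c}"
proof -
  have split: "{t\<in>{a..c}. \<not> m dvd t} = {t\<in>{a..b}. \<not> m dvd t} \<union> {t\<in>{b+1..c}. \<not> m dvd t}"
    using assms by auto
  show ?thesis unfolding prod_nonmultiples_def split
    by (rule prod.union_disjoint) (auto intro: rev_finite_subset[OF finite_atLeastAtMost_int])
qed

lemma prod_nonmultiples_singleton: "prod_nonmultiples m {e} = (if m dvd e then 1 else e)"
  by (simp add: prod_nonmultiples_def Collect_conj_eq)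

lemma prod_nonmultiples_eq_prod:
  "(\<And>t. t \<in> S \<Longrightarrow> \<not> m dvd t) \<Longrightarrow> prod_nonmultiples m S = (\<Prod>t\<in>S. t)"
  unfolding prod_nonmultiples_def by (rule prod.cong) auto

lemma prod_atLeastAtMost_eq_fact: "(\<Prod>t\<in>{1..int k}. t) = fact k"
proof (induction k)
  case 0 then show ?case by simp
next
  case (Suc k)
  have "{1..int (Suc k)} = insert (int k + 1) {1..int k}" by auto
  then show ?case using Suc by (simp add: algebra_simps)
qed

text \<open>The residues mod \<open>p\<close> of the non-multiples in a window of length \<open>p\<close> are \<open>1, \<dots>, p-1\<close>.\<close>
lemma prod_nonmultiples_window_cong:
  assumes "prime p"
  shows "[prod_nonmultiples (int p) {a..a + int p - 1} = -1] (mod int p)"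
proof -
  define P where "P = int p"
  have P1: "P > 1" using prime_gt_1_nat[OF assms] P_def by simp
  define T where "T = {t\<in>{a..a + P - 1}. \<not> P dvd t}"
  have "[prod_nonmultiples P {a..a + P - 1} = (\<Prod>t\<in>T. t mod P)] (mod P)"
    unfolding prod_nonmultiples_def T_def by (rule cong_prod) (simp add: cong_def)
  also have "(\<Prod>t\<in>T. t mod P) = (\<Prod>r\<in>{1..P - 1}. r)"
  proof (rule prod.reindex_bij_witness[where j = "\<lambda>t. t mod P" and i = "\<lambda>r. a + (r - a) mod P"])
    fix t assume t: "t \<in> T"
    then have "(t - a) mod P = t - a" unfolding T_def by simp
    then show "a + (t mod P - a) mod P = t"
      by (metis add.commute diff_add_cancel mod_diff_left_eq)
    have "t mod P \<noteq> 0" "0 \<le> t mod P" "t mod P < P"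
      using t P1 unfolding T_def by (simp_all add: dvd_eq_mod_eq_0)
    then show "t mod P \<in> {1..P - 1}" by simp
    show "t mod P = t mod P" ..
  next
    fix r assume r: "r \<in> {1..P - 1}"
    then show "(a + (r - a) mod P) mod P = r"
      by (simp add: mod_add_right_eq)
    then show "a + (r - a) mod P \<in> T" unfolding T_def using r P1
      by (auto simp: dvd_eq_mod_eq_0)
  qed
  also have "(\<Prod>r\<in>{1..P - 1}. r) = fact (p - 1)"
    using prod_atLeastAtMost_eq_fact[of "p - 1"] P1 P_def by simp
  finally show ?thesis using wilson_theorem[OF assms] cong_trans unfolding P_def by blast
qed

lemma prod_nonmultiples_shift_plus:
  "(\<Prod>j\<in>{j\<in>{1..N}. \<not> m dvd c + j}. c + j) = prod_nonmultiples m {c + 1..c + N}"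
  unfolding prod_nonmultiples_def
  by (rule prod.reindex_bij_witness[where i = "\<lambda>t. t - c" and j = "\<lambda>j. c + j"]) auto

lemma prod_nonmultiples_shift_minus:
  "(\<Prod>j\<in>{j\<in>{1..N}. \<not> m dvd c - j}. c - j) = prod_nonmultiples m {c - N..c - 1}"
  unfolding prod_nonmultiples_def
  by (rule prod.reindex_bij_witness[where i = "\<lambda>t. c - t" and j = "\<lambda>j. c - j"]) auto

lemma prod_grid_eq_prod_nonmultiples_plus:
  fixes c :: "int \<Rightarrow> int"
  assumes "finite I"
  shows "(\<Prod>(i, j)\<in>{(i, j). i \<in> I \<and> j \<in> {1..N} \<and> \<not> m dvd c i + j}. c i + j)
       = (\<Prod>i\<in>I. prod_nonmultiples m {c i + 1..c i + N})"
proof -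
  have "{(i, j). i \<in> I \<and> j \<in> {1..N} \<and> \<not> m dvd c i + j} = Sigma I (\<lambda>i. {j\<in>{1..N}. \<not> m dvd c i + j})"
    by auto
  then have "(\<Prod>(i, j)\<in>{(i, j). i \<in> I \<and> j \<in> {1..N} \<and> \<not> m dvd c i + j}. c i + j)
      = (\<Prod>i\<in>I. \<Prod>j\<in>{j\<in>{1..N}. \<not> m dvd c i + j}. c i + j)"
    using assms by (simp only:) (rule prod.Sigma[symmetric], auto intro: rev_finite_subset[OF finite_atLeastAtMost_int])
  also have "\<dots> = (\<Prod>i\<in>I. prod_nonmultiples m {c i + 1..c i + N})"
    using prod_nonmultiples_shift_plus by (rule prod.cong[OF refl])
  finally show ?thesis .
qed

lemma prod_grid_eq_prod_nonmultiples_minus: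
  fixes c :: "int \<Rightarrow> int"
  assumes "finite I"
  shows "(\<Prod>(i, j)\<in>{(i, j). i \<in> I \<and> j \<in> {1..N} \<and> \<not> m dvd c i - j}. c i - j)
       = (\<Prod>i\<in>I. prod_nonmultiples m {c i - N..c i - 1})"
proof -
  have "{(i, j). i \<in> I \<and> j \<in> {1..N} \<and> \<not> m dvd c i - j} = Sigma I (\<lambda>i. {j\<in>{1..N}. \<not> m dvd c i - j})"
    by auto
  then have "(\<Prod>(i, j)\<in>{(i, j). i \<in> I \<and> j \<in> {1..N} \<and> \<not> m dvd c i - j}. c i - j)
      = (\<Prod>i\<in>I. \<Prod>j\<in>{j\<in>{1..N}. \<not> m dvd c i - j}. c i - j)"
    using assms by (simp only:) (rule prod.Sigma[symmetric], auto intro: rev_finite_subset[OF finite_atLeastAtMost_int])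
  also have "\<dots> = (\<Prod>i\<in>I. prod_nonmultiples m {c i - N..c i - 1})"
    using prod_nonmultiples_shift_minus by (rule prod.cong[OF refl])
  finally show ?thesis .
qed

lemma prod_atLeastAtMost_int_add:
  fixes f :: "int \<Rightarrow> 'a :: comm_monoid_mult"
  assumes "0 \<le> a" and "0 \<le> b"
  shows "(\<Prod>i\<in>{1..a + b}. f i) = (\<Prod>i\<in>{1..a}. f i) * (\<Prod>i\<in>{1..b}. f (i + a))"
proof -
  have "{1..a + b} = {1..a} \<union> {a + 1..a + b}" using assms by auto
  then have "(\<Prod>i\<in>{1..a + b}. f i) = (\<Prod>i\<in>{1..a}. f i) * (\<Prod>i\<in>{a + 1..a + b}. f i)"
    by (simp add: prod.union_disjoint)
  also have "(\<Prod>i\<in>{a + 1..a + b}. f i) = (\<Prod>i\<in>{1..b}. f (i + a))"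
    by (rule prod.reindex_bij_witness[where i = "\<lambda>k. k + a" and j = "\<lambda>k. k - a"]) auto
  finally show ?thesis .
qed

lemma prod_consecutive_pairs:
  "(\<Prod>t\<in>{c + 1..c + 2 * int m}. t) = (\<Prod>i\<in>{1..int m}. (c + 2 * i - 1) * (c + 2 * i))"
proof (induction m)
  case 0 then show ?case by simp
next
  case (Suc m)
  have "{c + 1..c + 2 * int (Suc m)}
      = insert (c + 2 * int m + 2) (insert (c + 2 * int m + 1) {c + 1..c + 2 * int m})" by auto
  moreover have "{1..int (Suc m)} = insert (int m + 1) {1..int m}" by auto
  ultimately show ?case using Suc by (simp add: algebra_simps)
qed

subsection \<open>The two double products modulo \<open>p = 2n + 1\<close>\<close>

locale odd_prime =
  fixes p n :: nat
  assumes prime: "prime p" and p_eq: "p = 2 * n + 1"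
begin

definition upper_row :: "int \<Rightarrow> int" where
  "upper_row i = prod_nonmultiples (int p) {2 * i + 1..2 * i + int n}"

definition lower_row :: "int \<Rightarrow> int" where
  "lower_row i = prod_nonmultiples (int p) {2 * i - int n..2 * i - 1}"

definition plus_side :: int where
  "plus_side = int (dfact n) * (\<Prod>i\<in>{1..int n}. upper_row i)"

definition minus_side :: int where
  "minus_side = Legendre (-2) (int p) * int (dfact (n - 1)) * (\<Prod>i\<in>{1..int n}. lower_row i)"

lemma prime_int: "prime (int p)"
  using prime by simp

lemma n_pos: "n \<ge> 1"
  using prime_gt_1_nat[OF prime] p_eq by simp

lemma not_dvd_below: "1 \<le> t \<Longrightarrow> t < int p \<Longrightarrow> \<not> int p dvd t"
  using zdvd_imp_le[of "int p" t] by linarith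

text \<open>\<open>[2i-n, 2i+n]\<close> is a window of length \<open>p\<close>, cut by \<open>2i\<close> into the two rows.\<close>
lemma upper_lower_row_cong:
  assumes "i \<in> {1..int n}"
  shows "[upper_row i * lower_row i * (2 * i) = -1] (mod int p)"
proof -
  have "prod_nonmultiples (int p) {2 * i - int n..2 * i + int n}
      = lower_row i * prod_nonmultiples (int p) {2 * i..2 * i + int n}"
    unfolding lower_row_def using assms by (subst prod_nonmultiples_split[where b = "2 * i - 1"]) auto
  also have "prod_nonmultiples (int p) {2 * i..2 * i + int n} = 2 * i * upper_row i"
    unfolding upper_row_def using assms not_dvd_below[of "2 * i"] p_eq
    by (subst prod_nonmultiples_split[where b = "2 * i"]) (auto simp: prod_nonmultiples_singleton)
  finally show ?thesis
    using prod_nonmultiples_window_cong[OF prime, of "2 * i - int n"] p_eq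
    by (simp add: algebra_simps)
qed

lemma prod_rows_cong:
  "[(\<Prod>i\<in>{1..int n}. upper_row i) * (\<Prod>i\<in>{1..int n}. lower_row i) * (2 ^ n * fact n)
     = (-1) ^ n] (mod int p)"
proof -
  have "(\<Prod>i\<in>{1..int n}. upper_row i) * (\<Prod>i\<in>{1..int n}. lower_row i) * (2 ^ n * fact n)
      = (\<Prod>i\<in>{1..int n}. upper_row i) * (\<Prod>i\<in>{1..int n}. lower_row i) * (\<Prod>i\<in>{1..int n}. 2 * i)"
    by (simp only: prod_evens)
  also have "\<dots> = (\<Prod>i\<in>{1..int n}. upper_row i * lower_row i * (2 * i))"
    by (simp only: prod.distrib)
  also have "[\<dots> = (\<Prod>i\<in>{1..int n}. -1)] (mod int p)"
    by (rule cong_prod) (rule upper_lower_row_cong)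
  finally show ?thesis by simp
qed

lemma plus_side_mult_minus_side_cong: "[plus_side * minus_side = 1] (mod int p)"
proof -
  have "dfact n * dfact (n - 1) = fact n"
    using dfact_Suc_mult_dfact[of "n - 1"] n_pos by simp
  then have dfacts: "int (dfact n) * int (dfact (n - 1)) = fact n"
    by (metis of_nat_fact of_nat_mult)
  have "2 ^ n * (plus_side * minus_side) = Legendre (-2) (int p) *
      ((\<Prod>i\<in>{1..int n}. upper_row i) * (\<Prod>i\<in>{1..int n}. lower_row i) * (2 ^ n * fact n))"
    unfolding plus_side_def minus_side_def dfacts[symmetric] by (simp only: mult_ac)
  also have "[\<dots> = Legendre (-2) (int p) * (-1) ^ n] (mod int p)"
    by (rule cong_scalar_left) (rule prod_rows_cong)
  also have "[Legendre (-2) (int p) * (-1) ^ n = (-2) ^ n * (-1) ^ n] (mod int p)"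
  proof (rule cong_scalar_right)
    have "2 < p" using p_eq n_pos by simp
    then show "[Legendre (-2) (int p) = (-2) ^ n] (mod int p)"
      using euler_criterion[OF prime] p_eq by simp
  qed
  also have "(-2 :: int) ^ n * (-1) ^ n = 2 ^ n * 1" by (simp flip: power_mult_distrib)
  finally have "[2 ^ n * (plus_side * minus_side) = 2 ^ n * 1] (mod int p)" .
  moreover have "coprime (2 ^ n) (int p)"
    using prime_imp_coprime[of "int p" 2] prime_int not_dvd_below[of 2] p_eq n_pos
    by (simp add: coprime_commute)
  ultimately show ?thesis using cong_mult_lcancel by blast
qed

lemma upper_rows_even_cong:
  assumes "n = 2 * m"
  shows "[(\<Prod>i\<in>{1..int n}. upper_row i) * (\<Prod>i\<in>{1..int m}. 2 * i) = (-1) ^ m] (mod int p)"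
proof -
  have pair: "[upper_row i * upper_row (i + int m) * (2 * i) = -1] (mod int p)"
    if i: "i \<in> {1..int m}" for i
  proof -
    have "prod_nonmultiples (int p) {2 * i + 1..2 * i + int p}
        = upper_row i * prod_nonmultiples (int p) {2 * i + int n + 1..2 * i + int p}"
      unfolding upper_row_def using i p_eq
      by (subst prod_nonmultiples_split[where b = "2 * i + int n"]) auto
    also have "prod_nonmultiples (int p) {2 * i + int n + 1..2 * i + int p}
        = upper_row (i + int m) * prod_nonmultiples (int p) {2 * i + int p}"
      unfolding upper_row_def using i assms p_eq
      by (subst prod_nonmultiples_split[where b = "2 * i + 2 * int n"]) (auto simp: algebra_simps)
    also have "prod_nonmultiples (int p) {2 * i + int p} = 2 * i + int p"
      using i assms p_eq not_dvd_below[of "2 * i"]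
      by (simp add: prod_nonmultiples_singleton dvd_add_left_iff)
    finally have "[upper_row i * upper_row (i + int m) * (2 * i + int p) = -1] (mod int p)"
      using prod_nonmultiples_window_cong[OF prime, of "2 * i + 1"] by (simp add: algebra_simps)
    moreover have "[upper_row i * upper_row (i + int m) * (2 * i + int p)
        = upper_row i * upper_row (i + int m) * (2 * i)] (mod int p)"
      by (intro cong_scalar_left) (simp add: cong_def)
    ultimately show ?thesis by (metis cong_sym cong_trans)
  qed
  have "(\<Prod>i\<in>{1..int n}. upper_row i) * (\<Prod>i\<in>{1..int m}. 2 * i)
      = (\<Prod>i\<in>{1..int m}. upper_row i * upper_row (i + int m) * (2 * i))"
  proof -
    have "int n = int m + int m" using assms by simp
    then have "(\<Prod>i\<in>{1..int n}. upper_row i)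
        = (\<Prod>i\<in>{1..int m}. upper_row i) * (\<Prod>i\<in>{1..int m}. upper_row (i + int m))"
      using prod_atLeastAtMost_int_add[of "int m" "int m" upper_row] by simp
    then show ?thesis by (simp add: prod.distrib)
  qed
  also have "[\<dots> = (\<Prod>i\<in>{1..int m}. -1)] (mod int p)"
    by (rule cong_prod) (rule pair)
  finally show ?thesis by simp
qed

text \<open>The elements \<open>n + 2i + 1\<close> left over by the pairing windows are the odd half of the middle
  row, so they cancel.\<close>
lemma upper_rows_odd_cong:
  assumes "n = 2 * m + 1"
  shows "[(\<Prod>i\<in>{1..int n}. upper_row i) = (-1) ^ m * (\<Prod>i\<in>{1..int m}. int n + 2 * i)] (mod int p)"
proof -
  define E where "E = (\<Prod>i\<in>{1..int m}. int n + 2 * i + 1)"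
  have pair: "[upper_row i * upper_row (i + int m + 1) * (int n + 2 * i + 1) = -1] (mod int p)"
    if i: "i \<in> {1..int m}" for i
  proof -
    have "prod_nonmultiples (int p) {2 * i + 1..2 * i + int p}
        = upper_row i * prod_nonmultiples (int p) {2 * i + int n + 1..2 * i + int p}"
      unfolding upper_row_def using i p_eq
      by (subst prod_nonmultiples_split[where b = "2 * i + int n"]) auto
    also have "prod_nonmultiples (int p) {2 * i + int n + 1..2 * i + int p}
        = (int n + 2 * i + 1) * upper_row (i + int m + 1)"
      unfolding upper_row_def using i assms p_eq not_dvd_below[of "int n + 2 * i + 1"]
      by (subst prod_nonmultiples_split[where b = "2 * i + int n + 1"])
         (auto simp: prod_nonmultiples_singleton algebra_simps)
    finally show ?thesis
      using prod_nonmultiples_window_cong[OF prime, of "2 * i + 1"] by (simp add: algebra_simps)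
  qed
  have middle: "upper_row (int m + 1) = (\<Prod>i\<in>{1..int m}. int n + 2 * i) * E"
  proof -
    have "upper_row (int m + 1) = prod_nonmultiples (int p) {int n + 2..2 * int n}
        * prod_nonmultiples (int p) {2 * int n + 1}"
      unfolding upper_row_def using assms p_eq
      by (subst prod_nonmultiples_split[where b = "2 * int n"]) (auto simp: algebra_simps)
    also have "prod_nonmultiples (int p) {2 * int n + 1} = 1"
      using p_eq by (simp add: prod_nonmultiples_singleton add.commute)
    also have "prod_nonmultiples (int p) {int n + 2..2 * int n} = (\<Prod>t\<in>{int n + 2..2 * int n}. t)"
      using p_eq not_dvd_below by (intro prod_nonmultiples_eq_prod) auto
    also have "\<dots> = (\<Prod>i\<in>{1..int m}. (int n + 2 * i) * (int n + 2 * i + 1))"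
      using prod_consecutive_pairs[of "int n + 1" m] assms by (simp add: algebra_simps)
    finally show ?thesis unfolding E_def by (simp add: prod.distrib)
  qed
  have "(\<Prod>i\<in>{1..int n}. upper_row i) * E
      = (\<Prod>i\<in>{1..int m}. upper_row i * upper_row (i + int m + 1) * (int n + 2 * i + 1))
        * upper_row (int m + 1)"
  proof -
    have "(\<Prod>i\<in>{1..int n}. upper_row i)
        = (\<Prod>i\<in>{1..int m}. upper_row i) * upper_row (int m + 1) * (\<Prod>i\<in>{1..int m}. upper_row (i + int m + 1))"
      using prod_atLeastAtMost_int_add[of "int m + 1" "int m" upper_row]
        prod_atLeastAtMost_int_add[of "int m" 1 upper_row] assms
      by (simp add: algebra_simps)
    then show ?thesis unfolding E_def by (simp add: prod.distrib mult_ac)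
  qed
  also have "[\<dots> = (\<Prod>i\<in>{1..int m}. -1) * upper_row (int m + 1)] (mod int p)"
    by (intro cong_mult cong_prod pair cong_refl)
  finally have "[(\<Prod>i\<in>{1..int n}. upper_row i) * E
      = ((-1) ^ m * (\<Prod>i\<in>{1..int m}. int n + 2 * i)) * E] (mod int p)"
    unfolding middle by (simp add: mult_ac)
  moreover have "coprime E (int p)"
  proof -
    have "\<not> int p dvd E"
      unfolding E_def using prime_int assms p_eq not_dvd_below
      by (subst prime_dvd_prod_iff) auto
    then show ?thesis using prime_int prime_imp_coprime coprime_commute by blast
  qed
  ultimately show ?thesis using cong_mult_rcancel by blast
qed

lemma plus_side_square_cong: "[plus_side ^ 2 = 1] (mod int p)"
proof (cases "even n")
  case True
  then obtain m where m: "n = 2 * m" by blast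
  have "int (dfact n) = (\<Prod>i\<in>{1..int m}. 2 * i)"
    unfolding m by (rule dfact_even)
  then have "plus_side = (\<Prod>i\<in>{1..int n}. upper_row i) * (\<Prod>i\<in>{1..int m}. 2 * i)"
    unfolding plus_side_def by (simp only: mult.commute)
  then have "[plus_side = (-1) ^ m] (mod int p)"
    using upper_rows_even_cong[OF m] by simp
  then have "[plus_side ^ 2 = ((-1) ^ m) ^ 2] (mod int p)" by (rule cong_pow)
  then show ?thesis by (simp flip: power_mult)
next
  case False
  then obtain m where m: "n = 2 * m + 1" using oddE by blast
  have "[plus_side = int (dfact n) * ((-1) ^ m * (\<Prod>i\<in>{1..int m}. int n + 2 * i))] (mod int p)"
    unfolding plus_side_def by (rule cong_scalar_left) (rule upper_rows_odd_cong[OF m])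
  also have "int (dfact n) * ((-1) ^ m * (\<Prod>i\<in>{1..int m}. int n + 2 * i))
      = (-1) ^ m * int (dfact (2 * n - 1))"
    using dfact_add_double[of n m] m by (simp add: mult_ac)
  finally have "[plus_side ^ 2 = ((-1) ^ m * int (dfact (2 * n - 1))) ^ 2] (mod int p)"
    by (rule cong_pow)
  also have "((-1) ^ m * int (dfact (2 * n - 1))) ^ 2 = int (dfact (2 * n - 1)) ^ 2"
    by (simp add: power_mult_distrib flip: power_mult)
  also have "[\<dots> = (-1) ^ (n + 1)] (mod int p)"
    by (rule dfact_square_cong[OF prime p_eq])
  finally show ?thesis using False by simp
qed

end

theorem lemma6p1:
  fixes p :: nat
  assumes "prime p" and "p > 3"
  defines "A \<equiv> int (dfact ((p - 1) div 2)) *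
      (\<Prod>(i, j) \<in> {(i, j). i \<in> {1..int ((p - 1) div 2)} \<and> j \<in> {1..int ((p - 1) div 2)}
                        \<and> \<not> int p dvd 2 * i + j}. 2 * i + j)"
    and "B \<equiv> Legendre (-2) (int p) * int (dfact ((p - 3) div 2)) *
      (\<Prod>(i, j) \<in> {(i, j). i \<in> {1..int ((p - 1) div 2)} \<and> j \<in> {1..int ((p - 1) div 2)}
                        \<and> \<not> int p dvd 2 * i - j}. 2 * i - j)"
  shows "[A = B] (mod int p) \<and> ([B = 1] (mod int p) \<or> [B = -1] (mod int p))"
proof -
  define n where "n = (p - 1) div 2"
  have "odd p" using assms prime_odd_nat by simp
  then interpret odd_prime p n
    using assms(1) by unfold_locales (simp_all add: n_def)
  have "(p - 3) div 2 = n - 1" using p_eq by simp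
  then have "A = plus_side" and "B = minus_side"
    unfolding A_def B_def n_def[symmetric] plus_side_def minus_side_def upper_row_def lower_row_def
    using prod_grid_eq_prod_nonmultiples_plus
        [where c = "\<lambda>i. 2 * i" and I = "{1..int n}" and N = "int n" and m = "int p"]
      prod_grid_eq_prod_nonmultiples_minus
        [where c = "\<lambda>i. 2 * i" and I = "{1..int n}" and N = "int n" and m = "int p"]
    by simp_all
  moreover have "[plus_side = minus_side] (mod int p)"
    using plus_side_mult_minus_side_cong plus_side_square_cong by (rule cong_eq_if_mult_eq_one)
  moreover from this have "[minus_side ^ 2 = 1] (mod int p)"
    using plus_side_square_cong by (metis cong_pow cong_sym cong_trans)
  ultimately show ?thesis using cong_square_eq_one_prime[OF prime_int] by simp
qed

end
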